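(* Let $X,Y$ be compact metric spaces, $\pi_0$ a Borel probability on $X\times Y$ which is positive on nonempty open sets, with $x$-marginal $P_0$, and let $\nu$ be a Borel probability on $X$ with $\operatorname{supp}(\nu)=X$. Suppose there is a continuous $\phi:X\times Y\to\mathbb{R}$ such that $e^{\phi}$ is a $\nu$-Jacobian of $\pi_0$. Then there is a continuous $\psi_0:X\times Y\to\mathbb{R}$ such that $e^{\psi_0}$ is a $P_0$-Jacobian of $\pi_0$, and for every Borel probability $\pi$ on $X\times Y$, \[IG(\pi,\pi_0):=-\int\psi_0\,d\pi-H^{P_0}(\pi)\;=\;-\int\phi\,d\pi-H^{\nu}(\pi).\]
   Context: For a probability $\rho$ on $X$, a measurable $J:X\times Y\to[0,\infty)$ is a $\rho$-Jacobian of a probability $\pi$ on $X\times Y$ with $y$-marginal $Q$ if $\int J(x,y)\,d\rho(x)=1$ for every $y$ and $\int\!\int g(x,y)J(x,y)\,d\rho(x)\,dQ(y)=\int g\,d\pi$ for every bounded measurable $g$. $\mathcal{F}(\pi)$ is the set of measurable functions whose $\pi$-integral is well defined (not $+\infty-\infty$), and $H^{\rho}(\pi)=-\sup\{\int c\,d\pi:\ c\in\mathcal{F}(\pi),\ \int e^{c(x,y)}\,d\rho(x)=1\ \forall y\in Y\}$. *)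

theory Defs
  imports "HOL-Probability.Probability"
begin

definition support :: "'a::topological_space measure \<Rightarrow> 'a set" where
  "support \<mu> = {x. \<forall>U. open U \<longrightarrow> x \<in> U \<longrightarrow> emeasure \<mu> U > 0}"

definition is_jacobian ::
  "'a::topological_space measure \<Rightarrow> ('a \<times> 'b::topological_space) measure \<Rightarrow> ('a \<times> 'b \<Rightarrow> real) \<Rightarrow> bool" where
  "is_jacobian \<rho> \<pi> J \<longleftrightarrow>
     J \<in> borel_measurable borel \<and> (\<forall>z. 0 \<le> J z) \<and>
     (\<forall>y. (\<integral>\<^sup>+ x. ennreal (J (x, y)) \<partial>\<rho>) = 1) \<and>
     (\<forall>g \<in> borel_measurable (borel :: ('a \<times> 'b) measure). (\<exists>B. \<forall>z. \<bar>g z\<bar> \<le> B) \<longrightarrow>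
        (\<integral>y. (\<integral>x. g (x, y) * J (x, y) \<partial>\<rho>) \<partial>(distr \<pi> borel snd)) = (\<integral>z. g z \<partial>\<pi>))"

definition int_well_defined :: "'c measure \<Rightarrow> ('c \<Rightarrow> real) \<Rightarrow> bool" where
  "int_well_defined M c \<longleftrightarrow> c \<in> borel_measurable M \<and>
     \<not> ((\<integral>\<^sup>+ z. ennreal (c z) \<partial>M) = \<infinity> \<and> (\<integral>\<^sup>+ z. ennreal (- c z) \<partial>M) = \<infinity>)"

definition ext_integral :: "'c measure \<Rightarrow> ('c \<Rightarrow> real) \<Rightarrow> ereal" where
  "ext_integral M c = enn2ereal (\<integral>\<^sup>+ z. ennreal (c z) \<partial>M) - enn2ereal (\<integral>\<^sup>+ z. ennreal (- c z) \<partial>M)"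

definition rel_entropy_H :: "'a measure \<Rightarrow> ('a \<times> 'b) measure \<Rightarrow> ereal" where
  "rel_entropy_H \<rho> \<pi> = - (SUP c \<in> {c. int_well_defined \<pi> c \<and>
        (\<forall>y. (\<integral>\<^sup>+ x. ennreal (exp (c (x, y))) \<partial>\<rho>) = 1)}. ext_integral \<pi> c)"

end

theory Submission
  imports Defs
begin

text \<open>Integrating the Jacobian identity against indicators of cylinders \<open>A \<times> Y\<close> shows that the
  \<open>x\<close>-marginal \<open>P\<^sub>0\<close> of \<open>\<pi>\<^sub>0\<close> has density \<open>Z x = \<integral> exp (\<phi> (x, y)) dQ(y)\<close> with respect to \<open>\<nu>\<close>,
  where \<open>Q\<close> is the \<open>y\<close>-marginal. As \<open>\<phi>\<close> is continuous and bounded on the compact space, \<open>ln Z\<close> is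
  continuous and bounded, so \<open>\<psi>\<^sub>0 = \<phi> - ln Z\<close> is continuous and \<open>exp \<psi>\<^sub>0 = exp \<phi> / Z\<close> is a
  \<open>P\<^sub>0\<close>-Jacobian. Passing from \<open>\<nu>\<close> to \<open>P\<^sub>0 = Z \<nu>\<close> translates the admissible potentials in the
  definition of \<open>H\<close> by \<open>- ln Z\<close>, so \<open>H\<^bsup>P\<^sub>0\<^esub>(\<pi>) = H\<^bsup>\<nu>\<^esub>(\<pi>) + \<integral> ln Z d\<pi>\<close>, which exactly compensates
  the change of the potential term.\<close>

lemma borel_measurable_comp_fst:
  fixes k :: "'a::topological_space \<Rightarrow> 'c::topological_space"
  assumes "k \<in> borel_measurable borel"
  shows "(\<lambda>z. k (fst z)) \<in> borel_measurable (borel :: ('a \<times> 'b::topological_space) measure)"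
  by (rule measurable_compose[OF borel_measurable_continuous_onI assms]) (intro continuous_intros)

lemma
  fixes c :: "'a::topological_space \<times> 'b::topological_space \<Rightarrow> 'c::topological_space"
  assumes "c \<in> borel_measurable borel"
  shows borel_measurable_slice1: "(\<lambda>x. c (x, y)) \<in> borel_measurable borel"
    and borel_measurable_slice2: "(\<lambda>y. c (x, y)) \<in> borel_measurable borel"
  by (rule measurable_compose[OF borel_measurable_continuous_onI assms], intro continuous_intros)+

section \<open>Extended integrals under bounded perturbations\<close>

lemma nn_integral_add_bounded_less_top:
  fixes c h :: "'c \<Rightarrow> real"
  assumes "finite_measure M" and [measurable]: "c \<in> borel_measurable M"
    and h: "\<And>z. \<bar>h z\<bar> \<le> B" and c: "(\<integral>\<^sup>+ z. ennreal (c z) \<partial>M) < \<infinity>"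
  shows "(\<integral>\<^sup>+ z. ennreal (c z + h z) \<partial>M) < \<infinity>"
proof -
  have "(\<integral>\<^sup>+ z. ennreal (c z + h z) \<partial>M) \<le> (\<integral>\<^sup>+ z. ennreal (c z) + ennreal B \<partial>M)"
  proof (rule nn_integral_mono)
    fix z
    have "ennreal (c z + h z) \<le> ennreal (max (c z) 0 + B)"
      using h[of z] by (intro ennreal_leI) auto
    also have "\<dots> = ennreal (c z) + ennreal B"
      using h[of z] by (subst ennreal_plus) (auto simp: max_def ennreal_neg)
    finally show "ennreal (c z + h z) \<le> ennreal (c z) + ennreal B" .
  qed
  also have "\<dots> = (\<integral>\<^sup>+ z. ennreal (c z) \<partial>M) + ennreal B * emeasure M (space M)"
    by (subst nn_integral_add) auto
  also have "\<dots> < \<infinity>"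
    using c finite_measure.emeasure_finite[OF assms(1)]
    by (simp add: ennreal_mult_less_top less_top)
  finally show ?thesis .
qed

lemma ext_integral_eq_integral:
  fixes c :: "'c \<Rightarrow> real"
  assumes "integrable M c"
  shows "ext_integral M c = ereal (integral\<^sup>L M c)"
proof -
  obtain r q where "0 \<le> r" "0 \<le> q" "(\<integral>\<^sup>+ z. ennreal (c z) \<partial>M) = ennreal r"
    "(\<integral>\<^sup>+ z. ennreal (- c z) \<partial>M) = ennreal q" "integral\<^sup>L M c = r - q"
    using integrableE[OF assms] by metis
  then show ?thesis by (simp add: ext_integral_def)
qed

lemma
  fixes c h :: "'c \<Rightarrow> real"
  assumes M: "finite_measure M" and [measurable]: "h \<in> borel_measurable M"
    and h: "\<And>z. \<bar>h z\<bar> \<le> B" and c: "int_well_defined M c"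
  shows int_well_defined_add_bounded: "int_well_defined M (\<lambda>z. c z + h z)"
    and ext_integral_add_bounded:
      "ext_integral M (\<lambda>z. c z + h z) = ext_integral M c + ereal (integral\<^sup>L M h)"
proof -
  have [measurable]: "c \<in> borel_measurable M"
    using c by (simp add: int_well_defined_def)
  have h': "\<And>z. \<bar>- h z\<bar> \<le> B" using h by simp
  have pos: "(\<integral>\<^sup>+ z. ennreal (c z + h z) \<partial>M) < \<infinity> \<longleftrightarrow> (\<integral>\<^sup>+ z. ennreal (c z) \<partial>M) < \<infinity>"
    using nn_integral_add_bounded_less_top[where c=c and h=h, OF M _ h]
      nn_integral_add_bounded_less_top[where c="\<lambda>z. c z + h z" and h="\<lambda>z. - h z", OF M _ h'] by auto
  have neg: "(\<integral>\<^sup>+ z. ennreal (- (c z + h z)) \<partial>M) < \<infinity> \<longleftrightarrow> (\<integral>\<^sup>+ z. ennreal (- c z) \<partial>M) < \<infinity>"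
    using nn_integral_add_bounded_less_top[where c="\<lambda>z. - c z" and h="\<lambda>z. - h z", OF M _ h']
      nn_integral_add_bounded_less_top[where c="\<lambda>z. - (c z + h z)" and h=h, OF M _ h] by auto
  show "int_well_defined M (\<lambda>z. c z + h z)"
    using c pos neg by (auto simp: int_well_defined_def top.not_eq_extremum)
  show "ext_integral M (\<lambda>z. c z + h z) = ext_integral M c + ereal (integral\<^sup>L M h)"
  proof (cases "integrable M c")
    case True
    moreover have "integrable M h"
      using h by (intro finite_measure.integrable_const_bound[OF M, where B=B]) auto
    ultimately show ?thesis by (simp add: ext_integral_eq_integral)
  next
    case False
    then consider
        "(\<integral>\<^sup>+ z. ennreal (c z) \<partial>M) = \<infinity>" "(\<integral>\<^sup>+ z. ennreal (- c z) \<partial>M) < \<infinity>"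
      | "(\<integral>\<^sup>+ z. ennreal (c z) \<partial>M) < \<infinity>" "(\<integral>\<^sup>+ z. ennreal (- c z) \<partial>M) = \<infinity>"
      using c unfolding int_well_defined_def real_integrable_def
      by (auto simp flip: less_top)
    then show ?thesis
    proof cases
      case 1
      with pos neg have "(\<integral>\<^sup>+ z. ennreal (c z + h z) \<partial>M) = \<infinity>"
        "(\<integral>\<^sup>+ z. ennreal (- (c z + h z)) \<partial>M) < \<infinity>"
        by (auto simp flip: less_top)
      with 1 show ?thesis by (auto simp: ext_integral_def less_top_ennreal)
    next
      case 2
      with pos neg have "(\<integral>\<^sup>+ z. ennreal (c z + h z) \<partial>M) < \<infinity>"
        "(\<integral>\<^sup>+ z. ennreal (- (c z + h z)) \<partial>M) = \<infinity>"
        by (auto simp flip: less_top)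
      with 2 show ?thesis by (auto simp: ext_integral_def less_top_ennreal)
    qed
  qed
qed

section \<open>Relative entropy under a change of reference measure\<close>

definition normalized_potentials ::
  "'a measure \<Rightarrow> ('a \<times> 'b) measure \<Rightarrow> ('a \<times> 'b \<Rightarrow> real) set" where
  "normalized_potentials \<rho> \<pi> =
     {c. int_well_defined \<pi> c \<and> (\<forall>y. (\<integral>\<^sup>+ x. ennreal (exp (c (x, y))) \<partial>\<rho>) = 1)}"

lemma rel_entropy_H_eq_SUP:
  "rel_entropy_H \<rho> \<pi> = - (SUP c \<in> normalized_potentials \<rho> \<pi>. ext_integral \<pi> c)"
  unfolding rel_entropy_H_def normalized_potentials_def ..

lemma nn_integral_exp_density:
  fixes c :: "'a::topological_space \<times> 'b::topological_space \<Rightarrow> real"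
  assumes "sets \<rho> = sets borel" "k \<in> borel_measurable borel" "c \<in> borel_measurable borel"
  shows "(\<integral>\<^sup>+ x. ennreal (exp (c (x, y))) \<partial>density \<rho> (\<lambda>x. ennreal (exp (k x)))) =
    (\<integral>\<^sup>+ x. ennreal (exp (c (x, y) + k x)) \<partial>\<rho>)"
proof -
  note [measurable_cong] = assms(1)
  note [measurable] = borel_measurable_slice1[OF assms(3)]
  show ?thesis
    using assms(2) by (subst nn_integral_density)
      (auto simp: exp_add ennreal_mult[symmetric] mult.commute intro!: nn_integral_cong)
qed

lemma normalized_potentials_density:
  fixes k :: "'a::topological_space \<Rightarrow> real"
  assumes \<pi>: "finite_measure \<pi>" "sets \<pi> = sets (borel :: ('a \<times> 'b::topological_space) measure)"
    and \<rho>: "sets \<rho> = sets borel" and k: "k \<in> borel_measurable borel" "\<And>x. \<bar>k x\<bar> \<le> B"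
  shows "normalized_potentials (density \<rho> (\<lambda>x. ennreal (exp (k x)))) \<pi> =
    (\<lambda>c z. c z - k (fst z)) ` normalized_potentials \<rho> \<pi>"
proof -
  note [measurable_cong] = \<pi>(2)
  have [measurable]: "(\<lambda>z. k (fst z)) \<in> borel_measurable \<pi>"
    using borel_measurable_comp_fst[OF k(1)] by (simp add: measurable_cong_sets[OF \<pi>(2) refl])
  have kb: "\<bar>k (fst z)\<bar> \<le> B" "\<bar>- k (fst z)\<bar> \<le> B" for z
    using k(2) by auto
  have mem_iff: "c \<in> normalized_potentials (density \<rho> (\<lambda>x. ennreal (exp (k x)))) \<pi> \<longleftrightarrow>
      (\<lambda>z. c z + k (fst z)) \<in> normalized_potentials \<rho> \<pi>" for c
  proof -
    have "int_well_defined \<pi> c \<longleftrightarrow> int_well_defined \<pi> (\<lambda>z. c z + k (fst z))"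
      using int_well_defined_add_bounded[where h="\<lambda>z. k (fst z)", OF \<pi>(1) _ kb(1)]
        int_well_defined_add_bounded[where h="\<lambda>z. - k (fst z)", OF \<pi>(1) _ kb(2)]
      by fastforce
    moreover have "c \<in> borel_measurable borel" if "int_well_defined \<pi> c"
      using that by (simp add: int_well_defined_def measurable_cong_sets[OF \<pi>(2) refl])
    ultimately show ?thesis
      unfolding normalized_potentials_def by (auto simp: nn_integral_exp_density[OF \<rho> k(1)])
  qed
  show ?thesis
  proof (intro set_eqI iffI)
    fix c assume "c \<in> normalized_potentials (density \<rho> (\<lambda>x. ennreal (exp (k x)))) \<pi>"
    then show "c \<in> (\<lambda>c z. c z - k (fst z)) ` normalized_potentials \<rho> \<pi>"
      by (intro image_eqI[where x="\<lambda>z. c z + k (fst z)"]) (auto simp: mem_iff)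
  qed (auto simp: mem_iff)
qed

lemma rel_entropy_H_density:
  fixes k :: "'a::topological_space \<Rightarrow> real"
  assumes \<pi>: "finite_measure \<pi>" "sets \<pi> = sets (borel :: ('a \<times> 'b::topological_space) measure)"
    and \<rho>: "sets \<rho> = sets borel" and k: "k \<in> borel_measurable borel" "\<And>x. \<bar>k x\<bar> \<le> B"
  shows "rel_entropy_H (density \<rho> (\<lambda>x. ennreal (exp (k x)))) \<pi> =
    rel_entropy_H \<rho> \<pi> + ereal (\<integral>z. k (fst z) \<partial>\<pi>)"
proof -
  note [measurable_cong] = \<pi>(2)
  define S where "S = normalized_potentials \<rho> \<pi>"
  have km: "(\<lambda>z. - k (fst z)) \<in> borel_measurable \<pi>"
    using borel_measurable_comp_fst[OF k(1)] by (simp add: measurable_cong_sets[OF \<pi>(2) refl])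
  have kb: "\<bar>- k (fst z)\<bar> \<le> B" for z
    using k(2) by simp
  have shift: "ext_integral \<pi> (\<lambda>z. c z - k (fst z)) = ext_integral \<pi> c - ereal (\<integral>z. k (fst z) \<partial>\<pi>)"
    if "c \<in> S" for c
    using ext_integral_add_bounded[OF \<pi>(1) km kb, of c] that
    by (simp add: S_def normalized_potentials_def minus_ereal_def)
  have "(SUP c \<in> S. ext_integral \<pi> (\<lambda>z. c z - k (fst z))) =
      (SUP c \<in> S. ext_integral \<pi> c) - ereal (\<integral>z. k (fst z) \<partial>\<pi>)"
  proof (cases "S = {}")
    case False
    then show ?thesis
      using SUP_ereal_add_left[OF False, of "ereal (- (\<integral>z. k (fst z) \<partial>\<pi>))" "ext_integral \<pi>"]
      by (simp add: shift minus_ereal_def)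
  qed (simp add: bot_ereal_def)
  then show ?thesis
    unfolding rel_entropy_H_eq_SUP normalized_potentials_density[OF assms] image_image S_def
    by (cases "SUP c \<in> normalized_potentials \<rho> \<pi>. ext_integral \<pi> c") auto
qed

lemma tilted_information_gain_eq:
  fixes \<phi> :: "'a::topological_space \<times> 'b::topological_space \<Rightarrow> real"
  assumes \<pi>: "finite_measure \<pi>" "sets \<pi> = sets borel" "integrable \<pi> \<phi>"
    and \<nu>: "sets \<nu> = sets borel" and k: "k \<in> borel_measurable borel" "\<And>x. \<bar>k x\<bar> \<le> B"
  shows "- ereal (\<integral>z. \<phi> z - k (fst z) \<partial>\<pi>) - rel_entropy_H (density \<nu> (\<lambda>x. ennreal (exp (k x)))) \<pi>
    = - ereal (\<integral>z. \<phi> z \<partial>\<pi>) - rel_entropy_H \<nu> \<pi>"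
proof -
  have "integrable \<pi> (\<lambda>z. k (fst z))"
    using borel_measurable_comp_fst[OF k(1), where 'b='b] \<pi>(2) k(2)
    by (intro finite_measure.integrable_const_bound[OF \<pi>(1), where B=B]) auto
  then have "(\<integral>z. \<phi> z - k (fst z) \<partial>\<pi>) = (\<integral>z. \<phi> z \<partial>\<pi>) - (\<integral>z. k (fst z) \<partial>\<pi>)"
    using \<pi>(3) by simp
  then show ?thesis
    unfolding rel_entropy_H_density[OF \<pi>(1,2) \<nu> k]
    by (cases "rel_entropy_H \<nu> \<pi>") auto
qed

section \<open>Jacobians\<close>

lemma is_jacobian_density:
  fixes \<nu> :: "'a::topological_space measure" and \<pi> :: "('a \<times> 'b::topological_space) measure"
  assumes J: "is_jacobian \<nu> \<pi> J" and \<nu>: "sets \<nu> = sets borel"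
    and f: "f \<in> borel_measurable borel" "\<And>x. 0 < f x"
  shows "is_jacobian (density \<nu> (\<lambda>x. ennreal (f x))) \<pi> (\<lambda>z. J z / f (fst z))"
proof -
  note [measurable_cong] = \<nu> and [measurable] = f(1)
  have Jm[measurable]: "J \<in> borel_measurable borel" and J0: "\<And>z. 0 \<le> J z"
    and J1: "\<And>y. (\<integral>\<^sup>+ x. ennreal (J (x, y)) \<partial>\<nu>) = 1"
    using J by (auto simp: is_jacobian_def)
  have f_ne: "f x \<noteq> 0" for x
    using f(2)[of x] by simp
  have slice_eq: "f x * (J (x, y) / f x) = J (x, y)" for x y
    using f_ne[of x] by simp
  have "(\<lambda>z. J z / f (fst z)) \<in> borel_measurable borel"
    using borel_measurable_comp_fst[OF f(1)] by measurable
  moreover have "(\<integral>\<^sup>+ x. ennreal (J (x, y) / f x) \<partial>density \<nu> (\<lambda>x. ennreal (f x))) = 1" for y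
    using f(2) J0 J1[of y] borel_measurable_slice1[OF Jm, of y]
    by (subst nn_integral_density)
      (auto simp: ennreal_mult'[symmetric] slice_eq f_ne less_imp_le intro!: nn_integral_cong)
  moreover have "(\<integral>y. (\<integral>x. g (x, y) * (J (x, y) / f x) \<partial>density \<nu> (\<lambda>x. ennreal (f x)))
      \<partial>distr \<pi> borel snd) = (\<integral>z. g z \<partial>\<pi>)"
    if g: "g \<in> borel_measurable borel" "\<exists>B. \<forall>z. \<bar>g z\<bar> \<le> B" for g
  proof -
    note [measurable] = borel_measurable_slice1[OF g(1)] borel_measurable_slice1[OF Jm]
    have "(\<integral>x. g (x, y) * (J (x, y) / f x) \<partial>density \<nu> (\<lambda>x. ennreal (f x))) =
        (\<integral>x. g (x, y) * J (x, y) \<partial>\<nu>)" for y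
      using f(2) f_ne by (subst integral_density)
        (auto simp: less_imp_le intro!: Bochner_Integration.integral_cong)
    then show ?thesis
      using J g by (simp add: is_jacobian_def)
  qed
  ultimately show ?thesis
    using J0 f(2) by (auto simp: is_jacobian_def less_imp_le)
qed

lemma
  fixes \<nu> :: "'a::topological_space measure" and \<pi> :: "('a \<times> 'b::topological_space) measure"
  assumes J: "is_jacobian \<nu> \<pi> J" and \<nu>: "sets \<nu> = sets borel"
    and h: "h \<in> borel_measurable borel" "\<And>x. \<bar>h x\<bar> \<le> C"
  shows integrable_jacobian_slice: "integrable \<nu> (\<lambda>x. h x * J (x, y))"
    and abs_integral_jacobian_slice_le: "\<bar>\<integral>x. h x * J (x, y) \<partial>\<nu>\<bar> \<le> C"
proof -
  note [measurable_cong] = \<nu> and [measurable] = h(1)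
  have Jm: "J \<in> borel_measurable borel" and J0: "\<And>z. 0 \<le> J z"
    and J1: "(\<integral>\<^sup>+ x. ennreal (J (x, y)) \<partial>\<nu>) = 1"
    using J by (auto simp: is_jacobian_def)
  note [measurable] = borel_measurable_slice1[OF Jm]
  have J_slice: "integrable \<nu> (\<lambda>x. J (x, y))"
    using J0 J1 by (intro integrableI_nn_integral_finite[where x=1]) auto
  have J_slice_integral: "(\<integral>x. J (x, y) \<partial>\<nu>) = 1"
    using nn_integral_eq_integral[OF J_slice] J0 J1 by simp
  have C0: "0 \<le> C"
    using h(2) abs_ge_zero order.trans by blast
  have bound: "\<bar>h x * J (x, y)\<bar> \<le> C * J (x, y)" for x
    using h(2)[of x] J0[of "(x, y)"] by (simp add: abs_mult mult_right_mono)
  show int: "integrable \<nu> (\<lambda>x. h x * J (x, y))"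
    using bound C0 J0 by (intro Bochner_Integration.integrable_bound[OF integrable_mult_right[OF J_slice, of C]])
      (auto intro!: AE_I2 simp: abs_mult)
  have "\<bar>\<integral>x. h x * J (x, y) \<partial>\<nu>\<bar> \<le> (\<integral>x. \<bar>h x * J (x, y)\<bar> \<partial>\<nu>)"
    using integral_norm_bound[of \<nu> "\<lambda>x. h x * J (x, y)"] by simp
  also have "\<dots> \<le> (\<integral>x. C * J (x, y) \<partial>\<nu>)"
    using int J_slice bound by (intro integral_mono) auto
  finally show "\<bar>\<integral>x. h x * J (x, y) \<partial>\<nu>\<bar> \<le> C"
    using J_slice_integral by simp
qed

lemma is_jacobian_nn_integral:
  fixes \<pi> :: "('a::second_countable_topology \<times> 'b::second_countable_topology) measure"
  assumes \<pi>: "finite_measure \<pi>" "sets \<pi> = sets borel"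
    and \<nu>: "sigma_finite_measure \<nu>" "sets \<nu> = sets borel"
    and J: "is_jacobian \<nu> \<pi> J" and g: "g \<in> borel_measurable borel" "\<And>z. 0 \<le> g z" "\<And>z. g z \<le> C"
  shows "(\<integral>\<^sup>+ z. ennreal (g z) \<partial>\<pi>) =
    (\<integral>\<^sup>+ y. (\<integral>\<^sup>+ x. ennreal (g (x, y) * J (x, y)) \<partial>\<nu>) \<partial>distr \<pi> borel snd)"
proof -
  note [measurable_cong] = \<pi>(2) \<nu>(2) and [measurable] = g(1)
  have [measurable_cong]: "sets (borel \<Otimes>\<^sub>M borel) = sets (borel :: ('a \<times> 'b) measure)"
    by (subst borel_prod) (rule refl)
  define Q where "Q = distr \<pi> borel snd"
  have [measurable_cong]: "sets Q = sets borel"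
    unfolding Q_def by simp
  interpret \<pi>: finite_measure \<pi> by fact
  interpret \<nu>: sigma_finite_measure \<nu> by fact
  interpret Q: finite_measure Q
    unfolding Q_def by (rule \<pi>.finite_measure_distr)
      (simp add: measurable_cong_sets[OF \<pi>(2) refl] borel_measurable_continuous_onI continuous_on_snd)
  have [measurable]: "J \<in> borel_measurable borel" and J0: "\<And>z. 0 \<le> J z"
    using J by (auto simp: is_jacobian_def)
  have g_abs: "\<bar>g z\<bar> \<le> C" for z
    using g(2,3)[of z] by simp
  then have J_integral: "(\<integral>y. (\<integral>x. g (x, y) * J (x, y) \<partial>\<nu>) \<partial>Q) = (\<integral>z. g z \<partial>\<pi>)"
    using J g(1) unfolding is_jacobian_def Q_def by blast
  note slice = integrable_jacobian_slice[OF J \<nu>(2) borel_measurable_slice1[OF g(1)] g_abs]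
    abs_integral_jacobian_slice_le[OF J \<nu>(2) borel_measurable_slice1[OF g(1)] g_abs]
  have inner: "ennreal (\<integral>x. g (x, y) * J (x, y) \<partial>\<nu>) = (\<integral>\<^sup>+ x. ennreal (g (x, y) * J (x, y)) \<partial>\<nu>)" for y
    using slice(1) J0 g(2) by (intro nn_integral_eq_integral[symmetric]) auto
  have "(\<integral>\<^sup>+ z. ennreal (g z) \<partial>\<pi>) = ennreal (\<integral>z. g z \<partial>\<pi>)"
    using g by (intro nn_integral_eq_integral \<pi>.integrable_const_bound[where B=C] AE_I2) auto
  also have "\<dots> = ennreal (\<integral>y. (\<integral>x. g (x, y) * J (x, y) \<partial>\<nu>) \<partial>Q)"
    by (simp add: J_integral)
  also have "\<dots> = (\<integral>\<^sup>+ y. ennreal (\<integral>x. g (x, y) * J (x, y) \<partial>\<nu>) \<partial>Q)"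
    using slice(2) J0 g(2)
    by (intro nn_integral_eq_integral[symmetric] Q.integrable_const_bound[where B=C])
      (auto intro!: AE_I2 Bochner_Integration.integral_nonneg)
  finally show ?thesis
    by (simp add: inner Q_def)
qed

lemma is_jacobian_fst_marginal:
  fixes \<pi> :: "('a::second_countable_topology \<times> 'b::second_countable_topology) measure"
  assumes \<pi>: "finite_measure \<pi>" "sets \<pi> = sets borel"
    and \<nu>: "sigma_finite_measure \<nu>" "sets \<nu> = sets borel"
    and J: "is_jacobian \<nu> \<pi> J"
  shows "distr \<pi> borel fst = density \<nu> (\<lambda>x. \<integral>\<^sup>+ y. ennreal (J (x, y)) \<partial>distr \<pi> borel snd)"
proof (rule measure_eqI)
  note [measurable_cong] = \<pi>(2) \<nu>(2)
  have [measurable_cong]: "sets (borel \<Otimes>\<^sub>M borel) = sets (borel :: ('a \<times> 'b) measure)"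
    by (subst borel_prod) (rule refl)
  have [measurable]: "fst \<in> borel_measurable (borel :: ('a \<times> 'b) measure)"
    "snd \<in> borel_measurable (borel :: ('a \<times> 'b) measure)"
    by (auto intro!: borel_measurable_continuous_onI continuous_intros)
  have [measurable]: "J \<in> borel_measurable borel"
    using J by (simp add: is_jacobian_def)
  define Q where "Q = distr \<pi> borel snd"
  have [measurable_cong]: "sets Q = sets borel"
    unfolding Q_def by simp
  interpret Q: finite_measure Q
    unfolding Q_def by (rule finite_measure.finite_measure_distr[OF \<pi>(1)]) simp
  interpret \<nu>Q: pair_sigma_finite \<nu> Q
    using \<nu>(1) Q.sigma_finite_measure_axioms by (rule pair_sigma_finite.intro)
  show "sets (distr \<pi> borel fst) = sets (density \<nu> (\<lambda>x. \<integral>\<^sup>+ y. ennreal (J (x, y)) \<partial>Q))"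
    using \<nu>(2) by simp
  fix A assume "A \<in> sets (distr \<pi> borel fst)"
  then have [measurable]: "A \<in> sets borel" by simp
  have "emeasure (distr \<pi> borel fst) A = emeasure \<pi> (fst -` A \<inter> space \<pi>)"
    by (rule emeasure_distr) measurable
  also have "\<dots> = (\<integral>\<^sup>+ z. indicator (fst -` A \<inter> space \<pi>) z \<partial>\<pi>)"
    by (rule nn_integral_indicator[symmetric]) measurable
  also have "\<dots> = (\<integral>\<^sup>+ z. ennreal (indicator A (fst z)) \<partial>\<pi>)"
    by (intro nn_integral_cong) (simp add: indicator_def)
  also have "\<dots> = (\<integral>\<^sup>+ y. (\<integral>\<^sup>+ x. ennreal (indicator A x * J (x, y)) \<partial>\<nu>) \<partial>Q)"
    by (subst is_jacobian_nn_integral[OF \<pi> \<nu> J, where C=1]) (auto simp: Q_def)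
  also have "\<dots> = (\<integral>\<^sup>+ x. (\<integral>\<^sup>+ y. ennreal (indicator A x * J (x, y)) \<partial>Q) \<partial>\<nu>)"
    by (rule \<nu>Q.Fubini') measurable
  also have "\<dots> = (\<integral>\<^sup>+ x. (\<integral>\<^sup>+ y. ennreal (J (x, y)) \<partial>Q) * indicator A x \<partial>\<nu>)"
    by (intro nn_integral_cong) (simp split: split_indicator)
  also have "\<dots> = emeasure (density \<nu> (\<lambda>x. \<integral>\<^sup>+ y. ennreal (J (x, y)) \<partial>Q)) A"
    by (rule emeasure_density[symmetric]) measurable
  finally show "emeasure (distr \<pi> borel fst) A = emeasure (density \<nu> (\<lambda>x. \<integral>\<^sup>+ y. ennreal (J (x, y)) \<partial>Q)) A" .
qed

section \<open>The log-partition function\<close>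

lemma continuous_on_integral_bounded:
  fixes F :: "'a::metric_space \<times> 'b::metric_space \<Rightarrow> real"
  assumes Q: "finite_measure Q" "sets Q = sets borel"
    and F: "continuous_on UNIV F" "\<And>z. \<bar>F z\<bar> \<le> B"
  shows "continuous_on UNIV (\<lambda>x. \<integral>y. F (x, y) \<partial>Q)"
proof (rule continuous_on_sequentiallyI)
  fix u :: "nat \<Rightarrow> 'a" and a assume u: "u \<longlonglongrightarrow> a"
  note [measurable_cong] = Q(2)
  have [measurable]: "(\<lambda>y. F (x, y)) \<in> borel_measurable borel" for x
    by (rule borel_measurable_continuous_onI)
      (intro continuous_on_compose2[OF F(1)] continuous_intros, auto)
  have "(\<lambda>n. F (u n, y)) \<longlonglongrightarrow> F (a, y)" for y
    using F(1) u by (intro isCont_tendsto_compose[of _ F] tendsto_intros)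
      (auto simp: continuous_on_eq_continuous_at)
  then show "(\<lambda>n. \<integral>y. F (u n, y) \<partial>Q) \<longlonglongrightarrow> (\<integral>y. F (a, y) \<partial>Q)"
    using F(2) by (intro integral_dominated_convergence[where w="\<lambda>_. B"])
      (auto intro: finite_measure.integrable_const[OF Q(1)])
qed

definition log_partition :: "'b measure \<Rightarrow> ('a \<times> 'b \<Rightarrow> real) \<Rightarrow> 'a \<Rightarrow> real" where
  "log_partition Q \<phi> x = ln (\<integral>y. exp (\<phi> (x, y)) \<partial>Q)"

lemma
  fixes \<phi> :: "'a \<times> 'b \<Rightarrow> real"
  assumes "prob_space Q" "(\<lambda>y. \<phi> (x, y)) \<in> borel_measurable Q" "\<And>z. \<bar>\<phi> z\<bar> \<le> B"
  shows integral_exp_slice_pos: "0 < (\<integral>y. exp (\<phi> (x, y)) \<partial>Q)"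
    and abs_log_partition_le: "\<bar>log_partition Q \<phi> x\<bar> \<le> B"
    and nn_integral_exp_slice: "(\<integral>\<^sup>+ y. ennreal (exp (\<phi> (x, y))) \<partial>Q) = ennreal (exp (log_partition Q \<phi> x))"
proof -
  interpret Q: prob_space Q by fact
  have exp_bounds: "exp (- B) \<le> exp (\<phi> (x, y))" "exp (\<phi> (x, y)) \<le> exp B" for y
    using assms(3)[of "(x, y)"] by auto
  have int: "integrable Q (\<lambda>y. exp (\<phi> (x, y)))"
    using assms(2) exp_bounds by (intro Q.integrable_const_bound[where B="exp B"]) auto
  then have lower: "exp (- B) \<le> (\<integral>y. exp (\<phi> (x, y)) \<partial>Q)"
    and upper: "(\<integral>y. exp (\<phi> (x, y)) \<partial>Q) \<le> exp B"
    using exp_bounds by (auto intro: Q.integral_ge_const Q.integral_le_const)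
  show pos: "0 < (\<integral>y. exp (\<phi> (x, y)) \<partial>Q)"
    using lower by (rule less_le_trans[OF exp_gt_zero])
  show "\<bar>log_partition Q \<phi> x\<bar> \<le> B"
    using ln_ge_iff[OF pos, of "- B"] ln_mono[OF upper pos] lower
    by (simp add: log_partition_def abs_le_iff)
  show "(\<integral>\<^sup>+ y. ennreal (exp (\<phi> (x, y))) \<partial>Q) = ennreal (exp (log_partition Q \<phi> x))"
    using int pos by (simp add: log_partition_def nn_integral_eq_integral)
qed

lemma continuous_on_log_partition:
  fixes \<phi> :: "'a::metric_space \<times> 'b::metric_space \<Rightarrow> real"
  assumes Q: "prob_space Q" "sets Q = sets borel"
    and \<phi>: "continuous_on UNIV \<phi>" "\<And>z. \<bar>\<phi> z\<bar> \<le> B"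
  shows "continuous_on UNIV (log_partition Q \<phi>)"
proof -
  have slice: "(\<lambda>y. \<phi> (x, y)) \<in> borel_measurable Q" for x
    using borel_measurable_slice2[OF borel_measurable_continuous_onI[OF \<phi>(1)]] Q(2) by simp
  have pos: "(\<integral>y. exp (\<phi> (x, y)) \<partial>Q) \<noteq> 0" for x
    using integral_exp_slice_pos[OF Q(1) slice[of x] \<phi>(2)] by simp
  have "\<bar>exp (\<phi> z)\<bar> \<le> exp B" for z
    using \<phi>(2)[of z] by simp
  then have "continuous_on UNIV (\<lambda>x. \<integral>y. exp (\<phi> (x, y)) \<partial>Q)"
    by (intro continuous_on_integral_bounded[where B="exp B"] continuous_on_exp \<phi>(1)
        prob_space.axioms(1)[OF Q(1)] Q(2))
  then show ?thesis
    unfolding log_partition_def[abs_def] by (rule continuous_on_ln) (simp add: pos)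
qed

lemma
  fixes \<pi>\<^sub>0 :: "('a::{metric_space, second_countable_topology} \<times> 'b::{metric_space, second_countable_topology}) measure"
  assumes \<pi>\<^sub>0: "prob_space \<pi>\<^sub>0" "sets \<pi>\<^sub>0 = sets borel" and \<nu>: "prob_space \<nu>" "sets \<nu> = sets borel"
    and \<phi>: "continuous_on UNIV \<phi>" "\<And>z. \<bar>\<phi> z\<bar> \<le> B" and J: "is_jacobian \<nu> \<pi>\<^sub>0 (\<lambda>z. exp (\<phi> z))"
  shows continuous_on_log_partition_snd: "continuous_on UNIV (log_partition (distr \<pi>\<^sub>0 borel snd) \<phi>)"
    and abs_log_partition_snd_le: "\<bar>log_partition (distr \<pi>\<^sub>0 borel snd) \<phi> x\<bar> \<le> B"
    and distr_fst_eq_density_log_partition: "distr \<pi>\<^sub>0 borel fst =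
      density \<nu> (\<lambda>x. ennreal (exp (log_partition (distr \<pi>\<^sub>0 borel snd) \<phi> x)))"
proof -
  define Q where "Q = distr \<pi>\<^sub>0 borel snd"
  have "snd \<in> borel_measurable \<pi>\<^sub>0"
    using borel_measurable_continuous_onI[OF continuous_on_snd[OF continuous_on_id]]
    by (simp add: measurable_cong_sets[OF \<pi>\<^sub>0(2) refl])
  then have Q: "prob_space Q" "sets Q = sets borel"
    unfolding Q_def by (auto intro: prob_space.prob_space_distr[OF \<pi>\<^sub>0(1)])
  have slice: "(\<lambda>y. \<phi> (x, y)) \<in> borel_measurable Q" for x
    using borel_measurable_slice2[OF borel_measurable_continuous_onI[OF \<phi>(1)]] Q(2) by simp
  show "continuous_on UNIV (log_partition (distr \<pi>\<^sub>0 borel snd) \<phi>)"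
    using continuous_on_log_partition[OF Q \<phi>] by (simp add: Q_def)
  show "\<bar>log_partition (distr \<pi>\<^sub>0 borel snd) \<phi> x\<bar> \<le> B"
    using abs_log_partition_le[OF Q(1) slice \<phi>(2)] by (simp add: Q_def)
  show "distr \<pi>\<^sub>0 borel fst = density \<nu> (\<lambda>x. ennreal (exp (log_partition (distr \<pi>\<^sub>0 borel snd) \<phi> x)))"
    using is_jacobian_fst_marginal[OF prob_space.axioms(1)[OF \<pi>\<^sub>0(1)] \<pi>\<^sub>0(2)
        prob_space_imp_sigma_finite[OF \<nu>(1)] \<nu>(2) J]
    unfolding Q_def[symmetric] by (simp add: nn_integral_exp_slice[OF Q(1) slice \<phi>(2)])
qed

theorem mainTheorem10:
  fixes \<pi>\<^sub>0 :: "('a::{metric_space, second_countable_topology} \<times> 'b::{metric_space, second_countable_topology}) measure"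
    and \<nu> :: "'a measure"
    and \<phi> :: "'a \<times> 'b \<Rightarrow> real"
  assumes "compact (UNIV :: 'a set)" and "compact (UNIV :: 'b set)"
    and "prob_space \<pi>\<^sub>0" and "sets \<pi>\<^sub>0 = sets borel"
    and "\<forall>U. open U \<and> U \<noteq> {} \<longrightarrow> emeasure \<pi>\<^sub>0 U > 0"
    and "prob_space \<nu>" and "sets \<nu> = sets borel"
    and "support \<nu> = UNIV"
    and "continuous_on UNIV \<phi>"
    and "is_jacobian \<nu> \<pi>\<^sub>0 (\<lambda>z. exp (\<phi> z))"
  shows "\<exists>\<psi>\<^sub>0 :: 'a \<times> 'b \<Rightarrow> real. continuous_on UNIV \<psi>\<^sub>0 \<and>
           is_jacobian (distr \<pi>\<^sub>0 borel fst) \<pi>\<^sub>0 (\<lambda>z. exp (\<psi>\<^sub>0 z)) \<and>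
           (\<forall>\<pi> :: ('a \<times> 'b) measure. prob_space \<pi> \<and> sets \<pi> = sets borel \<longrightarrow>
              - ereal (\<integral>z. \<psi>\<^sub>0 z \<partial>\<pi>) - rel_entropy_H (distr \<pi>\<^sub>0 borel fst) \<pi>
              = - ereal (\<integral>z. \<phi> z \<partial>\<pi>) - rel_entropy_H \<nu> \<pi>)"
proof -
  have "bounded (range \<phi>)"
    using compact_Times[OF assms(1,2)] assms(9)
    by (intro compact_imp_bounded compact_continuous_image) auto
  then obtain B where B: "\<And>z. \<bar>\<phi> z\<bar> \<le> B"
    unfolding bounded_real by auto
  define k where "k = log_partition (distr \<pi>\<^sub>0 borel snd) \<phi>"
  note marginal_hyps = assms(3,4,6,7,9) B assms(10)
  have k: "continuous_on UNIV k" "\<And>x. \<bar>k x\<bar> \<le> B"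
    and P\<^sub>0: "distr \<pi>\<^sub>0 borel fst = density \<nu> (\<lambda>x. ennreal (exp (k x)))"
    unfolding k_def using continuous_on_log_partition_snd[OF marginal_hyps]
      abs_log_partition_snd_le[OF marginal_hyps] distr_fst_eq_density_log_partition[OF marginal_hyps] by auto
  have k_measurable[measurable]: "k \<in> borel_measurable borel"
    using k(1) by (rule borel_measurable_continuous_onI)
  define \<psi> where "\<psi> z = \<phi> z - k (fst z)" for z
  have "continuous_on UNIV \<psi>"
    unfolding \<psi>_def by (intro continuous_intros assms(9) continuous_on_compose2[OF k(1)]) auto
  moreover have "is_jacobian (distr \<pi>\<^sub>0 borel fst) \<pi>\<^sub>0 (\<lambda>z. exp (\<psi> z))"
    using is_jacobian_density[OF assms(10,7), of "\<lambda>x. exp (k x)"]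
    by (simp add: P\<^sub>0 \<psi>_def exp_diff)
  moreover have "- ereal (\<integral>z. \<psi> z \<partial>\<pi>) - rel_entropy_H (distr \<pi>\<^sub>0 borel fst) \<pi>
      = - ereal (\<integral>z. \<phi> z \<partial>\<pi>) - rel_entropy_H \<nu> \<pi>"
    if "prob_space \<pi>" "sets \<pi> = sets borel" for \<pi> :: "('a \<times> 'b) measure"
  proof -
    have "integrable \<pi> \<phi>"
      using that B borel_measurable_continuous_onI[OF assms(9)]
      by (intro finite_measure.integrable_const_bound[OF prob_space.axioms(1), where B=B]) auto
    then show ?thesis
      unfolding \<psi>_def P\<^sub>0 using that k(2)
      by (intro tilted_information_gain_eq prob_space.axioms(1) assms(7) k_measurable) auto
  qed
  ultimately show ?thesis by blast
qed

end
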